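(* Let $f(z) = e^{-bz^2} f_1(z)$, where $b \geq 0$ and $f_1(z) \not\equiv 0$ is a real entire function of genus $0$ or $1$. Let $g(z) = \sum_{\ell=0}^{M} c_\ell z^\ell = \prod_{j=1}^{M} (z+\alpha_j)$ (with $\alpha_1,\ldots,\alpha_M \in \mathbb{C}$) be a monic even polynomial with non-negative real coefficients $c_\ell$ having at least one non-real root. Define $\Phi(z,t) = \prod_{j=1}^{M} f(z+\alpha_j t)$ and, for $k \geq 0$, \[ A_k(z) = \frac{1}{k!}\left[\frac{\partial^k}{\partial t^k} \prod_{j=1}^{M} f(z+\alpha_j t)\right]_{t=0}, \] so that $\Phi(z,t) = \sum_{k=0}^\infty A_k(z) t^k$. Then $f$ belongs to the Laguerre–Pólya class $\mathcal{LP}$ if and only if $A_k(x) \geq 0$ for all $x \in \mathbb{R}$ and all $k \geq 0$.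
   Context: A real entire function is an entire function taking real values on the real axis. The Laguerre–Pólya class $\mathcal{LP}$ is the set of real entire functions that are limits, uniformly on compact subsets of $\mathbb{C}$, of polynomials with real coefficients having only real zeros; equivalently, $f \in \mathcal{LP}$ iff $f(z) = e^{-bz^2} f_1(z)$ with $b \geq 0$ and $f_1$ a real entire function of genus $0$ or $1$ having only real zeros. A polynomial $g$ is even if $g(-z) = g(z)$. *)

theory Defs
  imports "HOL-Analysis.Analysis" "HOL-Computational_Algebra.Polynomial"
begin

definition real_entire :: "(complex \<Rightarrow> complex) \<Rightarrow> bool" where
  "real_entire f \<longleftrightarrow> f holomorphic_on UNIV \<and> (\<forall>x::real. f (complex_of_real x) \<in> \<real>)"

definition E1 :: "complex \<Rightarrow> complex" where
  "E1 w = (1 - w) * exp w"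

text \<open>Genus 0 or 1 (i.e. genus at most 1), for a not identically zero entire function:
  Hadamard-type representation  f(z) = c z^m e^(beta z) prod_n E1(z / a_n)  with
  sum 1/|a_n|^2 finite.  Entries a_n = 0 are allowed as padding (they contribute the
  factor E1 0 = 1 and the term 0 to the sum), so finitely many zeros are covered.\<close>
definition genus_le_1 :: "(complex \<Rightarrow> complex) \<Rightarrow> bool" where
  "genus_le_1 f \<longleftrightarrow> f holomorphic_on UNIV \<and>
     (\<exists>c m \<beta> (a :: nat \<Rightarrow> complex). c \<noteq> 0 \<and>
        summable (\<lambda>n. 1 / (cmod (a n))\<^sup>2) \<and>
        (\<forall>z. f z = c * z ^ m * exp (\<beta> * z) * (\<Prod>n. E1 (z / a n))))"

definition laguerre_polya :: "(complex \<Rightarrow> complex) \<Rightarrow> bool" where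
  "laguerre_polya f \<longleftrightarrow>
     (\<exists>p :: nat \<Rightarrow> complex poly.
        (\<forall>n i. coeff (p n) i \<in> \<real>) \<and>
        (\<forall>n z. poly (p n) z = 0 \<longrightarrow> z \<in> \<real>) \<and>
        (\<forall>K. compact K \<longrightarrow> uniform_limit K (\<lambda>n. poly (p n)) f sequentially))"

end

theory Submission
  imports Defs "HOL-Complex_Analysis.Complex_Analysis"
    "HOL-Computational_Algebra.Fundamental_Theorem_Algebra" "HOL-Library.Complex_Order"
begin

text \<open>
  Necessity: if real polynomials \<open>p\<^sub>n\<close> with only real zeros converge to \<open>f\<close> locally uniformly,
  then \<open>\<Prod>\<^sub>j p\<^sub>n(x + \<alpha>\<^sub>j t)\<close> converges to \<open>\<Phi>(x, t)\<close> together with all \<open>t\<close>-derivatives at \<open>0\<close>.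
  Each real root \<open>r\<close> of \<open>p\<^sub>n\<close> contributes the factor \<open>\<Prod>\<^sub>j (x - r + \<alpha>\<^sub>j t)\<close>, the reversal of
  \<open>g((x - r) t)\<close>, which has nonnegative coefficients because \<open>g\<close> is even with nonnegative
  coefficients; the leading coefficient of \<open>p\<^sub>n\<close> enters to the even power \<open>deg g\<close>.

  Sufficiency: for real \<open>t \<ge> 0\<close> the series \<open>\<Sum> A\<^sub>k(x) t\<^sup>k\<close> has nonnegative terms, so \<open>|\<Phi>(x, t)|\<close>
  is nondecreasing in \<open>t\<close>.  A nonreal zero \<open>z\<^sub>0\<close> of \<open>f\<close> can be written \<open>x\<^sub>0 + \<alpha>\<^sub>j t\<^sub>0\<close> with \<open>t\<^sub>0 > 0\<close>,
  since evenness of \<open>g\<close> puts some \<open>\<alpha>\<^sub>j\<close> in the half plane of \<open>z\<^sub>0\<close>; then \<open>\<Phi>(x\<^sub>0, \<cdot>)\<close>, stripped of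
  its factors with \<open>\<alpha>\<^sub>j = 0\<close>, vanishes on \<open>[0, t\<^sub>0]\<close> and hence identically, which is impossible.
  So \<open>f\<close> has only real zeros.  Then the Hadamard parameters of \<open>f\<^sub>1\<close> are real, and its partial
  products, like \<open>exp(-b z\<^sup>2)\<close>, are locally uniform limits of real-rooted polynomials via
  \<open>(1 + \<gamma> z/n)\<^sup>n \<rightarrow> exp(\<gamma> z)\<close>.
\<close>

section \<open>Real-rooted polynomials and the Laguerre-Polya class\<close>

definition real_rooted_poly :: "complex poly \<Rightarrow> bool" where
  "real_rooted_poly p \<longleftrightarrow> (\<forall>i. coeff p i \<in> \<real>) \<and> (\<forall>z. poly p z = 0 \<longrightarrow> z \<in> \<real>)"

lemma real_rooted_poly_1 [simp]: "real_rooted_poly 1"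
  by (simp add: real_rooted_poly_def coeff_1)

lemma real_rooted_poly_mult:
  "real_rooted_poly p \<Longrightarrow> real_rooted_poly q \<Longrightarrow> real_rooted_poly (p * q)"
  unfolding real_rooted_poly_def by (auto simp: coeff_mult intro!: Reals_mult)

lemma real_rooted_poly_power: "real_rooted_poly p \<Longrightarrow> real_rooted_poly (p ^ n)"
  by (induction n) (simp_all add: real_rooted_poly_mult)

lemma real_rooted_poly_prod:
  "(\<And>i. i \<in> A \<Longrightarrow> real_rooted_poly (p i)) \<Longrightarrow> real_rooted_poly (\<Prod>i\<in>A. p i)"
  by (induction A rule: infinite_finite_induct) (simp_all add: real_rooted_poly_mult)

lemma real_rooted_poly_linear:
  assumes "a \<in> \<real>" "b \<in> \<real>" "a \<noteq> 0 \<or> b \<noteq> 0"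
  shows "real_rooted_poly [:a, b:]"
  unfolding real_rooted_poly_def
proof safe
  show "coeff [:a, b:] i \<in> \<real>" for i
    using assms by (simp add: coeff_pCons split: nat.split)
next
  fix z assume "poly [:a, b:] z = 0"
  then have "b * z = - a"
    by (simp add: add_eq_0_iff mult.commute)
  moreover from this have "b \<noteq> 0"
    using assms(3) by auto
  ultimately have "z = - a / b"
    by (simp add: field_simps)
  then show "z \<in> \<real>"
    using assms by simp
qed

lemma real_rooted_poly_nonzero: "real_rooted_poly p \<Longrightarrow> p \<noteq> 0"
  by (auto simp: real_rooted_poly_def complex_is_Real_iff dest: spec[of _ \<i>])

lemma laguerre_polya_iff:
  "laguerre_polya F \<longleftrightarrow> (\<exists>p. (\<forall>n. real_rooted_poly (p n)) \<and>
     (\<forall>K. compact K \<longrightarrow> uniform_limit K (\<lambda>n. poly (p n)) F sequentially))"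
  unfolding laguerre_polya_def real_rooted_poly_def by meson

lemma laguerre_polya_bounded:
  assumes "laguerre_polya F" "compact K"
  shows "bounded (F ` K)"
proof -
  obtain p where "uniform_limit K (\<lambda>n. poly (p n)) F sequentially"
    using assms by (auto simp: laguerre_polya_def)
  then have "continuous_on K F"
    by (rule uniform_limit_theorem[rotated])
       (simp_all add: continuous_on_poly[OF continuous_on_id])
  then show ?thesis
    using assms(2) by (intro compact_imp_bounded compact_continuous_image)
qed

lemma laguerre_polya_poly: "real_rooted_poly p \<Longrightarrow> laguerre_polya (poly p)"
  unfolding laguerre_polya_iff by (intro exI[of _ "\<lambda>_. p"]) (simp add: uniform_limit_const)

lemma laguerre_polya_mult:
  assumes "laguerre_polya F" "laguerre_polya G"
  shows "laguerre_polya (\<lambda>z. F z * G z)"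
proof -
  obtain p where p: "\<And>n. real_rooted_poly (p n)"
    "\<And>K. compact K \<Longrightarrow> uniform_limit K (\<lambda>n. poly (p n)) F sequentially"
    using assms(1) unfolding laguerre_polya_iff by blast
  obtain q where q: "\<And>n. real_rooted_poly (q n)"
    "\<And>K. compact K \<Longrightarrow> uniform_limit K (\<lambda>n. poly (q n)) G sequentially"
    using assms(2) unfolding laguerre_polya_iff by blast
  have "(\<lambda>n. poly (p n * q n)) = (\<lambda>n z. poly (p n) z * poly (q n) z)"
    by (simp add: fun_eq_iff)
  moreover have "uniform_limit K (\<lambda>n z. poly (p n) z * poly (q n) z) (\<lambda>z. F z * G z) sequentially"
    if "compact K" for K
    using that by (intro uniform_lim_mult p(2) q(2) laguerre_polya_bounded assms)
  ultimately have "uniform_limit K (\<lambda>n. poly (p n * q n)) (\<lambda>z. F z * G z) sequentially"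
    if "compact K" for K
    using that by simp
  with p(1) q(1) show ?thesis
    unfolding laguerre_polya_iff by (intro exI[of _ "\<lambda>n. p n * q n"]) (auto intro: real_rooted_poly_mult)
qed

lemma uniform_limit_compact_of_cball_bounds:
  fixes h :: "nat \<Rightarrow> 'a::real_normed_vector \<Rightarrow> 'b::metric_space"
  assumes h: "\<And>n z. z \<in> cball 0 (real n + 1) \<Longrightarrow> dist (h n z) (F z) < 1 / (real n + 1)"
    and "compact K"
  shows "uniform_limit K h F sequentially"
proof (rule uniform_limitI)
  fix e :: real assume "e > 0"
  obtain R where R: "\<And>z. z \<in> K \<Longrightarrow> norm z \<le> R"
    using compact_imp_bounded[OF \<open>compact K\<close>] by (auto simp: bounded_iff)
  obtain N :: nat where N: "real N > max R (1 / e)"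
    using reals_Archimedean2 by blast
  show "\<forall>\<^sub>F n in sequentially. \<forall>z\<in>K. dist (h n z) (F z) < e"
  proof (rule eventually_sequentiallyI[of N], intro ballI)
    fix n z assume "N \<le> n" "z \<in> K"
    then have "z \<in> cball 0 (real n + 1)" "1 / e < real n + 1"
      using N R[of z] of_nat_mono[of N n] by auto
    then have "z \<in> cball 0 (real n + 1)" "1 / (real n + 1) < e"
      using \<open>e > 0\<close> by (auto simp: field_simps)
    with h[of z n] show "dist (h n z) (F z) < e"
      by linarith
  qed
qed

lemma laguerre_polya_locally_uniform_limit:
  assumes lim: "\<And>R. R > 0 \<Longrightarrow> uniform_limit (cball 0 R) G F sequentially"
    and LP: "\<And>n. laguerre_polya (G n)"
  shows "laguerre_polya F"
proof -
  have "\<forall>n. \<exists>q. real_rooted_poly q \<and>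
          (\<forall>z\<in>cball 0 (real n + 1). dist (poly q z) (F z) < 1 / (real n + 1))"
  proof
    fix n
    define e where "e = 1 / (2 * (real n + 1))"
    have "e > 0" by (simp add: e_def)
    have lim_n: "uniform_limit (cball 0 (real n + 1)) G F sequentially"
      by (rule lim) simp
    obtain N where N: "\<forall>z\<in>cball 0 (real n + 1). dist (G N z) (F z) < e"
      using uniform_limitD[OF lim_n \<open>e > 0\<close>] unfolding eventually_sequentially
      by (meson order_refl)
    obtain p where p: "\<And>m. real_rooted_poly (p m)"
      "uniform_limit (cball 0 (real n + 1)) (\<lambda>m. poly (p m)) (G N) sequentially"
      using LP[of N] compact_cball unfolding laguerre_polya_iff by blast
    obtain m where m: "\<forall>z\<in>cball 0 (real n + 1). dist (poly (p m) z) (G N z) < e"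
      using uniform_limitD[OF p(2) \<open>e > 0\<close>] unfolding eventually_sequentially
      by (meson order_refl)
    have "e + e = 1 / (real n + 1)"
      by (simp add: e_def field_simps)
    then have "dist (poly (p m) z) (F z) < 1 / (real n + 1)" if "z \<in> cball 0 (real n + 1)" for z
      using dist_triangle[of "poly (p m) z" "F z" "G N z"] m N that by fastforce
    with p(1) show "\<exists>q. real_rooted_poly q \<and>
          (\<forall>z\<in>cball 0 (real n + 1). dist (poly q z) (F z) < 1 / (real n + 1))"
      by blast
  qed
  then obtain q where q: "\<And>n. real_rooted_poly (q n)"
      "\<And>n z. z \<in> cball 0 (real n + 1) \<Longrightarrow> dist (poly (q n) z) (F z) < 1 / (real n + 1)"
    by (metis choice)
  show ?thesis
    unfolding laguerre_polya_iff
    by (intro exI[of _ q] conjI allI impI q(1) uniform_limit_compact_of_cball_bounds[OF q(2)])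
qed

section \<open>Exponential factors\<close>

lemma E1_eq_weierstrass_factor: "E1 = weierstrass_factor 1"
  by (simp add: fun_eq_iff E1_def weierstrass_factor_def)

lemma norm_exp_minus_linear_le:
  fixes w :: complex
  assumes "norm w \<le> 1 / 2"
  shows "norm (exp w - (1 + w)) \<le> 3 * exp (norm w) * norm w ^ 2"
proof -
  have "exp w - (1 + w) = exp w * (1 - E1 (- w))"
    by (simp add: E1_def algebra_simps flip: exp_add)
  also have "norm \<dots> = norm (exp w) * norm (weierstrass_factor 1 (- w) - 1)"
    by (simp add: E1_eq_weierstrass_factor norm_mult norm_minus_commute)
  also have "\<dots> \<le> exp (norm w) * (3 * norm w ^ 2)"
    using weierstrass_factor_bound[of "- w" 1] assms
    by (intro mult_mono) (auto simp: norm_exp complex_Re_le_cmod power2_eq_square)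
  finally show ?thesis
    by (simp add: mult_ac)
qed

lemma norm_power_diff_le:
  fixes a b :: "'a::real_normed_field"
  assumes "norm a \<le> M" "norm b \<le> M" "1 \<le> M"
  shows "norm (a ^ n - b ^ n) \<le> real n * norm (a - b) * M ^ n"
proof (induction n)
  case (Suc n)
  have "a ^ Suc n - b ^ Suc n = a * (a ^ n - b ^ n) + (a - b) * b ^ n"
    by (simp add: algebra_simps)
  then have "norm (a ^ Suc n - b ^ Suc n) \<le> norm a * norm (a ^ n - b ^ n) + norm (a - b) * norm b ^ n"
    by (metis norm_mult norm_power norm_triangle_ineq)
  also have "\<dots> \<le> M * (real n * norm (a - b) * M ^ n) + norm (a - b) * M ^ n"
    using assms Suc by (intro add_mono mult_mono mult_left_mono power_mono) auto
  also have "\<dots> \<le> M * (real n * norm (a - b) * M ^ n) + norm (a - b) * M ^ Suc n"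
    using assms by (intro add_left_mono mult_left_mono) (auto intro: power_increasing)
  also have "\<dots> = real (Suc n) * norm (a - b) * M ^ Suc n"
    by (simp add: algebra_simps)
  finally show ?case .
qed simp

lemma norm_compound_minus_exp_le:
  fixes u :: complex
  assumes "n > 0" "2 * R \<le> real n" "norm u \<le> R"
  shows "norm ((1 + u / of_nat n) ^ n - exp u) \<le> 3 * exp (R + 1) * R\<^sup>2 / real n"
proof -
  define w where "w = u / of_nat n"
  define M where "M = exp (R / real n)"
  have "R \<ge> 0"
    using assms(3) norm_ge_zero[of u] by linarith
  have w: "norm w \<le> R / real n"
    using assms by (simp add: w_def norm_divide divide_right_mono)
  have "R / real n \<le> 1 / 2"
    using assms(1,2) by (simp add: field_simps)
  with w have w2: "norm w \<le> 1 / 2"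
    by linarith
  have "norm (exp w) \<le> M"
    using w by (simp add: M_def norm_exp order.trans[OF complex_Re_le_cmod])
  moreover have "norm (1 + w) \<le> M"
  proof -
    have "norm (1 + w) \<le> 1 + norm w"
      using norm_triangle_ineq[of 1 w] by simp
    also have "\<dots> \<le> exp (norm w)"
      by (rule exp_ge_add_one_self)
    also have "\<dots> \<le> M"
      using w by (simp add: M_def)
    finally show ?thesis .
  qed
  moreover have "1 \<le> M"
    using assms(1) \<open>R \<ge> 0\<close> by (simp add: M_def)
  ultimately have "norm (exp w ^ n - (1 + w) ^ n) \<le> real n * norm (exp w - (1 + w)) * M ^ n"
    by (rule norm_power_diff_le)
  also have "\<dots> \<le> real n * (3 * exp (1 / 2) * (R / real n)\<^sup>2) * exp R"
  proof -
    have "norm (exp w - (1 + w)) \<le> 3 * exp (norm w) * norm w ^ 2"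
      by (rule norm_exp_minus_linear_le[OF w2])
    also have "\<dots> \<le> 3 * exp (1 / 2) * (R / real n)\<^sup>2"
      using w w2 by (intro mult_mono power_mono) auto
    finally show ?thesis
      using assms(1) by (intro mult_mono mult_left_mono) (simp_all add: M_def flip: exp_of_nat_mult)
  qed
  also have "\<dots> = 3 * (exp (1 / 2) * exp R) * R\<^sup>2 / real n"
    using assms(1) by (simp add: power2_eq_square field_simps)
  also have "\<dots> \<le> 3 * exp (R + 1) * R\<^sup>2 / real n"
    by (intro divide_right_mono mult_right_mono mult_left_mono) (simp_all flip: exp_add)
  finally show ?thesis
    using assms(1) by (simp add: w_def norm_minus_commute flip: exp_of_nat_mult)
qed

lemma uniform_limit_exp_compound:
  "uniform_limit (cball (0 :: complex) R) (\<lambda>n u. (1 + u / of_nat n) ^ n) exp sequentially"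
proof (rule uniform_limitI)
  fix e :: real assume "e > 0"
  define C where "C = 3 * exp (R + 1) * R\<^sup>2"
  obtain N :: nat where N: "real N > max (2 * R) (C / e)"
    using reals_Archimedean2 by blast
  show "\<forall>\<^sub>F n in sequentially. \<forall>u\<in>cball (0 :: complex) R. dist ((1 + u / of_nat n) ^ n) (exp u) < e"
  proof (rule eventually_sequentiallyI[of "Suc N"], intro ballI)
    fix n and u :: complex assume n: "Suc N \<le> n" and u: "u \<in> cball 0 R"
    then have "n > 0" "2 * R \<le> real n" "C / e < real n"
      using N by auto
    then have "C / real n < e"
      using \<open>e > 0\<close> by (simp add: field_simps)
    with norm_compound_minus_exp_le[OF \<open>n > 0\<close> \<open>2 * R \<le> real n\<close>, of u] u
    show "dist ((1 + u / of_nat n) ^ n) (exp u) < e"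
      by (simp add: dist_norm C_def)
  qed
qed

lemma laguerre_polya_exp_linear:
  assumes "\<gamma> \<in> \<real>"
  shows "laguerre_polya (\<lambda>z. exp (\<gamma> * z))"
proof (rule laguerre_polya_locally_uniform_limit[where G = "\<lambda>n. poly ([:1, \<gamma> / of_nat n:] ^ n)"])
  fix R :: real assume "R > 0"
  have "uniform_limit (cball 0 R) (\<lambda>n z. (1 + \<gamma> * z / of_nat n) ^ n) (\<lambda>z. exp (\<gamma> * z)) sequentially"
    using \<open>R > 0\<close>
    by (intro uniform_limit_compose'[OF uniform_limit_exp_compound[of "norm \<gamma> * R"]])
       (auto simp: norm_mult intro!: mult_left_mono)
  moreover have "(\<lambda>n. poly ([:1, \<gamma> / of_nat n:] ^ n)) = (\<lambda>n z. (1 + \<gamma> * z / of_nat n) ^ n)"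
    by (simp add: fun_eq_iff poly_power mult.commute)
  ultimately show "uniform_limit (cball 0 R) (\<lambda>n. poly ([:1, \<gamma> / of_nat n:] ^ n)) (\<lambda>z. exp (\<gamma> * z))
      sequentially"
    by simp
next
  show "laguerre_polya (poly ([:1, \<gamma> / of_nat n:] ^ n))" for n
    using assms by (intro laguerre_polya_poly real_rooted_poly_power real_rooted_poly_linear) auto
qed

lemma laguerre_polya_exp_neg_square:
  assumes "b \<ge> 0"
  shows "laguerre_polya (\<lambda>z. exp (- complex_of_real b * z\<^sup>2))"
proof -
  define s where "s n = complex_of_real (sqrt (b / real n))" for n
  define p where "p n = ([:1, s n:] * [:1, - s n:]) ^ n" for n
  have "poly (p n) z = (1 + - complex_of_real b * z\<^sup>2 / of_nat n) ^ n" for n z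
  proof -
    have "s n * s n = complex_of_real b / of_nat n"
      using assms by (simp add: s_def flip: of_real_mult)
    then show ?thesis
      by (simp add: p_def poly_power algebra_simps power2_eq_square)
  qed
  then have p: "(\<lambda>n. poly (p n)) = (\<lambda>n z. (1 + - complex_of_real b * z\<^sup>2 / of_nat n) ^ n)"
    by (simp add: fun_eq_iff)
  show ?thesis
  proof (rule laguerre_polya_locally_uniform_limit[where G = "\<lambda>n. poly (p n)"])
    fix R :: real assume "R > 0"
    have "norm (- complex_of_real b * z\<^sup>2) \<le> b * R\<^sup>2" if "norm z \<le> R" for z
      using that assms by (auto simp: norm_mult norm_power intro!: mult_left_mono power_mono)
    then show "uniform_limit (cball 0 R) (\<lambda>n. poly (p n)) (\<lambda>z. exp (- complex_of_real b * z\<^sup>2)) sequentially"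
      unfolding p using assms
      by (intro uniform_limit_compose'[OF uniform_limit_exp_compound[of "b * R\<^sup>2"]]) auto
  next
    show "laguerre_polya (poly (p n))" for n
      unfolding p_def s_def
      by (intro laguerre_polya_poly real_rooted_poly_power real_rooted_poly_mult real_rooted_poly_linear)
         auto
  qed
qed

section \<open>Functions of genus at most one\<close>

lemma eventually_norm_E1_minus_1_le:
  fixes a :: "nat \<Rightarrow> complex"
  assumes "summable (\<lambda>n. 1 / (cmod (a n))\<^sup>2)" and "R > 0"
  shows "\<forall>\<^sub>F n in sequentially. \<forall>z\<in>cball 0 R. norm (E1 (z / a n) - 1) \<le> 3 * R\<^sup>2 * (1 / (cmod (a n))\<^sup>2)"
proof -
  have "(\<lambda>n. 1 / (cmod (a n))\<^sup>2) \<longlonglongrightarrow> 0"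
    by (rule summable_LIMSEQ_zero[OF assms(1)])
  then have "\<forall>\<^sub>F n in sequentially. 1 / (cmod (a n))\<^sup>2 < 1 / (4 * R\<^sup>2)"
    using assms(2) by (intro order_tendstoD(2)) auto
  then show ?thesis
  proof (rule eventually_mono, intro ballI)
    fix n and z :: complex
    assume n: "1 / (cmod (a n))\<^sup>2 < 1 / (4 * R\<^sup>2)" and z: "z \<in> cball 0 R"
    have "(norm z)\<^sup>2 \<le> R\<^sup>2"
      using z by (intro power_mono) auto
    then have sq: "(norm (z / a n))\<^sup>2 \<le> R\<^sup>2 * (1 / (cmod (a n))\<^sup>2)"
      by (simp add: norm_divide power_divide divide_right_mono)
    also have "\<dots> \<le> R\<^sup>2 * (1 / (4 * R\<^sup>2))"
      using n by (intro mult_left_mono) auto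
    also have "\<dots> = (1 / 2)\<^sup>2"
      using assms(2) by (simp add: power2_eq_square field_simps)
    finally have "norm (z / a n) \<le> 1 / 2"
      by (rule power2_le_imp_le) auto
    then have "norm (E1 (z / a n) - 1) \<le> 3 * (norm (z / a n))\<^sup>2"
      using weierstrass_factor_bound[of "z / a n" 1] by (simp add: E1_eq_weierstrass_factor power2_eq_square)
    with sq show "norm (E1 (z / a n) - 1) \<le> 3 * R\<^sup>2 * (1 / (cmod (a n))\<^sup>2)"
      by simp
  qed
qed

lemma convergent_prod_E1:
  fixes a :: "nat \<Rightarrow> complex"
  assumes "summable (\<lambda>n. 1 / (cmod (a n))\<^sup>2)"
  shows "convergent_prod (\<lambda>n. E1 (z / a n))"
proof -
  have "z \<in> cball 0 (norm z + 1)" "norm z + 1 > 0"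
    by (auto intro: add_nonneg_pos)
  then have "abs_convergent_prod (\<lambda>n. E1 (z / a n))"
    unfolding abs_convergent_prod_conv_summable
    by (intro summable_comparison_test_ev[OF _ summable_mult[OF assms]]
          eventually_mono[OF eventually_norm_E1_minus_1_le[OF assms]]) auto
  then show ?thesis
    by (rule abs_convergent_prod_imp_convergent_prod)
qed

lemma uniform_limit_prod_E1:
  fixes a :: "nat \<Rightarrow> complex"
  assumes sa: "summable (\<lambda>n. 1 / (cmod (a n))\<^sup>2)" and "R > 0"
  shows "uniform_limit (cball 0 R) (\<lambda>N z. \<Prod>n<N. E1 (z / a n)) (\<lambda>z. \<Prod>n. E1 (z / a n)) sequentially"
proof -
  have "uniformly_convergent_on (cball 0 R) (\<lambda>N z. \<Prod>n<N. E1 (z / a n))"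
  proof (rule uniformly_convergent_on_prod')
    show "uniformly_convergent_on (cball 0 R) (\<lambda>N z. \<Sum>n<N. norm (E1 (z / a n) - 1))"
      using eventually_norm_E1_minus_1_le[OF sa \<open>R > 0\<close>]
      by (intro Weierstrass_m_test'_ev[OF _ summable_mult[OF sa]]) simp
    show "continuous_on (cball 0 R) (\<lambda>z. E1 (z / a n))" for n
      unfolding E1_def divide_inverse by (intro continuous_intros)
  qed (rule compact_cball)
  then obtain G where G: "uniform_limit (cball 0 R) (\<lambda>N z. \<Prod>n<N. E1 (z / a n)) G sequentially"
    unfolding uniformly_convergent_on_def by blast
  have eq: "G z = (\<Prod>n. E1 (z / a n))" if "z \<in> cball 0 R" for z
  proof (rule LIMSEQ_unique)
    show "(\<lambda>N. \<Prod>n<Suc N. E1 (z / a n)) \<longlonglongrightarrow> G z"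
      using LIMSEQ_Suc[OF tendsto_uniform_limitI[OF G that]] .
    show "(\<lambda>N. \<Prod>n<Suc N. E1 (z / a n)) \<longlonglongrightarrow> (\<Prod>n. E1 (z / a n))"
      using convergent_prod_LIMSEQ[OF convergent_prod_E1[OF sa]] unfolding lessThan_Suc_atMost .
  qed
  show ?thesis
    by (rule uniform_limit_cong'[THEN iffD1, OF _ _ G]) (simp_all add: eq)
qed

lemma prodinf_E1_eq_0:
  fixes a :: "nat \<Rightarrow> complex"
  assumes "summable (\<lambda>n. 1 / (cmod (a n))\<^sup>2)" and "a k \<noteq> 0"
  shows "(\<Prod>n. E1 (a k / a n)) = 0"
proof -
  have "E1 (a k / a k) = 0"
    using assms(2) by (simp add: E1_def)
  then show ?thesis
    using has_prod_eq_0_iff convergent_prod_has_prod[OF convergent_prod_E1[OF assms(1)]]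
    by (metis rangeI)
qed

lemma prodinf_E1_real:
  fixes a :: "nat \<Rightarrow> complex"
  assumes "summable (\<lambda>n. 1 / (cmod (a n))\<^sup>2)" and "\<And>n. a n \<in> \<real>" and "z \<in> \<real>"
  shows "(\<Prod>n. E1 (z / a n)) \<in> \<real>"
proof (rule Lim_in_closed_set[OF closed_complex_Reals _ _ convergent_prod_LIMSEQ[OF convergent_prod_E1]])
  show "\<forall>\<^sub>F N in sequentially. (\<Prod>n\<le>N. E1 (z / a n)) \<in> \<real>"
    using assms(2,3) by (intro always_eventually allI prod_in_Reals) (simp add: E1_def)
qed (use assms(1) in auto)

lemma prod_E1_eq_poly_exp:
  fixes a :: "nat \<Rightarrow> complex"
  shows "(\<Prod>n<N. E1 (z / a n)) = poly (\<Prod>n<N. [:1, - 1 / a n:]) z * exp ((\<Sum>n<N. 1 / a n) * z)"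
proof -
  have "exp ((\<Sum>n<N. 1 / a n) * z) = (\<Prod>n<N. exp (z / a n))"
    unfolding sum_distrib_right by (subst exp_sum) simp_all
  then show ?thesis
    by (simp add: E1_def prod.distrib poly_prod)
qed

lemma exp_linear_real_on_interval:
  assumes "c \<noteq> 0" "d > 0"
    and real: "\<And>x. 0 < x \<Longrightarrow> x < d \<Longrightarrow> c * exp (\<beta> * complex_of_real x) \<in> \<real>"
  shows "\<beta> \<in> \<real>" and "c \<in> \<real>"
proof -
  define x where "x = d / 2"
  define h where "h = min (d / 4) (1 / (\<bar>Im \<beta>\<bar> + 1))"
  have h: "0 < h" "h \<le> d / 4" "h \<le> 1 / (\<bar>Im \<beta>\<bar> + 1)"
    using \<open>d > 0\<close> by (auto simp: h_def)
  then have x: "0 < x" "x < d" "0 < x + h" "x + h < d"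
    using \<open>d > 0\<close> by (auto simp: x_def)
  have "exp (\<beta> * complex_of_real h) =
      c * exp (\<beta> * complex_of_real (x + h)) / (c * exp (\<beta> * complex_of_real x))"
    using \<open>c \<noteq> 0\<close> by (simp add: distrib_left exp_add)
  also have "\<dots> \<in> \<real>"
    using real[of "x + h"] real[of x] x by (intro Reals_divide) auto
  finally have "sin (Im \<beta> * h) = 0"
    by (simp add: complex_is_Real_iff Im_exp)
  moreover have "\<bar>Im \<beta> * h\<bar> < pi"
  proof -
    have "\<bar>Im \<beta> * h\<bar> \<le> \<bar>Im \<beta>\<bar> * (1 / (\<bar>Im \<beta>\<bar> + 1))"
      using mult_left_mono[OF h(3), of "\<bar>Im \<beta>\<bar>"] h(1) by (simp add: abs_mult)
    also have "\<dots> < 1"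
      by (simp add: field_simps)
    finally show ?thesis
      using pi_gt3 by linarith
  qed
  ultimately have "Im \<beta> * h = 0"
    using sin_zero_pi_iff by blast
  then show "\<beta> \<in> \<real>"
    using h by (simp add: complex_is_Real_iff)
  have "c = c * exp (\<beta> * complex_of_real x) / exp (\<beta> * complex_of_real x)"
    by simp
  also have "\<dots> \<in> \<real>"
    using real x \<open>\<beta> \<in> \<real>\<close> by (intro Reals_divide exp_in_Reals) auto
  finally show "c \<in> \<real>" .
qed

lemma hadamard_parameters_real:
  fixes a :: "nat \<Rightarrow> complex"
  assumes f: "real_entire f" and "f z1 \<noteq> 0" and real_zeros: "\<And>z. f z = 0 \<Longrightarrow> z \<in> \<real>"
    and "c \<noteq> 0" and sa: "summable (\<lambda>n. 1 / (cmod (a n))\<^sup>2)"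
    and f_eq: "\<And>z. f z = c * z ^ m * exp (\<beta> * z) * (\<Prod>n. E1 (z / a n))"
  shows "a n \<in> \<real>" and "\<beta> \<in> \<real>" and "c \<in> \<real>"
proof -
  have a_real: "a n \<in> \<real>" for n
  proof (cases "a n = 0")
    case False
    then show ?thesis
      using prodinf_E1_eq_0[OF sa] real_zeros[of "a n"] by (simp add: f_eq)
  qed simp
  then show "a n \<in> \<real>" .
  have "\<forall>\<^sub>F w in at 0. f w \<noteq> 0 \<and> w \<in> UNIV"
    using f \<open>f z1 \<noteq> 0\<close> unfolding real_entire_def
    by (intro non_zero_neighbour_alt[of f UNIV]) auto
  then obtain d where "d > 0" and f_nonzero: "\<And>w. w \<noteq> 0 \<Longrightarrow> dist w 0 < d \<Longrightarrow> f w \<noteq> 0"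
    unfolding eventually_at by auto
  have "c * exp (\<beta> * complex_of_real x) \<in> \<real>" if "0 < x" "x < d" for x
  proof -
    define P where "P = (\<Prod>n. E1 (complex_of_real x / a n))"
    have "f (complex_of_real x) \<noteq> 0"
      using f_nonzero[of "complex_of_real x"] that by auto
    then have "c * exp (\<beta> * complex_of_real x) = f (complex_of_real x) / (complex_of_real x ^ m * P)"
      using that(1) by (simp add: f_eq P_def field_simps)
    also have "\<dots> \<in> \<real>"
      using f prodinf_E1_real[OF sa a_real] unfolding real_entire_def P_def
      by (intro Reals_divide Reals_mult Reals_power) auto
    finally show ?thesis .
  qed
  then show "\<beta> \<in> \<real>" "c \<in> \<real>"
    using exp_linear_real_on_interval[OF \<open>c \<noteq> 0\<close> \<open>d > 0\<close>] by blast+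
qed

lemma laguerre_polya_hadamard_product:
  fixes a :: "nat \<Rightarrow> complex"
  assumes "c \<in> \<real>" "c \<noteq> 0" "\<beta> \<in> \<real>" and a_real: "\<And>n. a n \<in> \<real>"
    and sa: "summable (\<lambda>n. 1 / (cmod (a n))\<^sup>2)"
  shows "laguerre_polya (\<lambda>z. c * z ^ m * exp (\<beta> * z) * (\<Prod>n. E1 (z / a n)))"
proof -
  define K where "K z = c * z ^ m * exp (\<beta> * z)" for z
  define P where "P z = (\<Prod>n. E1 (z / a n))" for z
  define \<gamma> where "\<gamma> N = \<beta> + (\<Sum>n<N. 1 / a n)" for N
  define Q where "Q N = [:c:] * ([:0, 1:] ^ m * (\<Prod>n<N. [:1, - 1 / a n:]))" for N
  have KP_eq: "K z * (\<Prod>n<N. E1 (z / a n)) = poly (Q N) z * exp (\<gamma> N * z)" for N z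
    by (simp add: K_def Q_def \<gamma>_def prod_E1_eq_poly_exp poly_power distrib_right exp_add)
  show ?thesis
  proof (rule laguerre_polya_locally_uniform_limit[where G = "\<lambda>N z. poly (Q N) z * exp (\<gamma> N * z)"])
    fix R :: real assume "R > 0"
    have "continuous_on (cball 0 R) P"
      unfolding P_def
      by (rule uniform_limit_theorem[OF _ uniform_limit_prod_E1[OF sa \<open>R > 0\<close>]])
         (auto simp: E1_def divide_inverse intro!: always_eventually continuous_intros)
    moreover have "continuous_on (cball 0 R) K"
      unfolding K_def by (intro continuous_intros)
    ultimately have "uniform_limit (cball 0 R) (\<lambda>N z. K z * (\<Prod>n<N. E1 (z / a n))) (\<lambda>z. K z * P z)
        sequentially"
      unfolding P_def
      by (intro uniform_lim_mult uniform_limit_const uniform_limit_prod_E1 sa \<open>R > 0\<close>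
          compact_imp_bounded compact_continuous_image compact_cball)
    then show "uniform_limit (cball 0 R) (\<lambda>N z. poly (Q N) z * exp (\<gamma> N * z))
        (\<lambda>z. c * z ^ m * exp (\<beta> * z) * (\<Prod>n. E1 (z / a n))) sequentially"
      using KP_eq by (simp add: K_def P_def)
  next
    have "real_rooted_poly [:c:]"
      using real_rooted_poly_linear[of c 0] assms(1,2) by simp
    then have "real_rooted_poly (Q N)" for N
      unfolding Q_def using a_real
      by (intro real_rooted_poly_mult real_rooted_poly_power real_rooted_poly_prod
          real_rooted_poly_linear) auto
    moreover have "\<gamma> N \<in> \<real>" for N
      unfolding \<gamma>_def using assms(3) a_real by (intro Reals_add sum_in_Reals Reals_divide) auto
    ultimately show "laguerre_polya (\<lambda>z. poly (Q N) z * exp (\<gamma> N * z))" for N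
      by (intro laguerre_polya_mult laguerre_polya_poly laguerre_polya_exp_linear)
  qed
qed

lemma laguerre_polya_genus_le_1:
  assumes "real_entire f" "genus_le_1 f" "f z1 \<noteq> 0" "\<And>z. f z = 0 \<Longrightarrow> z \<in> \<real>"
  shows "laguerre_polya f"
proof -
  obtain c m \<beta> a where "c \<noteq> 0" and sa: "summable (\<lambda>n. 1 / (cmod (a n))\<^sup>2)"
    and f_eq: "\<And>z. f z = c * z ^ m * exp (\<beta> * z) * (\<Prod>n. E1 (z / a n))"
    using assms(2) unfolding genus_le_1_def by blast
  note real = hadamard_parameters_real[OF assms(1,3,4) \<open>c \<noteq> 0\<close> sa f_eq]
  have "f = (\<lambda>z. c * z ^ m * exp (\<beta> * z) * (\<Prod>n. E1 (z / a n)))"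
    by (simp add: fun_eq_iff f_eq)
  then show ?thesis
    using laguerre_polya_hadamard_product[OF real(3) \<open>c \<noteq> 0\<close> real(2) real(1) sa] by simp
qed

section \<open>Nonnegativity of the coefficients \<open>A\<^sub>k\<close>\<close>

(* The order on complex from Complex_Order: 0 \<le> c means that c is a nonnegative real. *)
definition nonneg_coeffs :: "complex poly \<Rightarrow> bool" where
  "nonneg_coeffs p \<longleftrightarrow> (\<forall>i. 0 \<le> coeff p i)"

lemma nonneg_coeffs_iff: "nonneg_coeffs p \<longleftrightarrow> (\<forall>i. \<exists>c \<ge> 0. coeff p i = complex_of_real c)"
  unfolding nonneg_coeffs_def less_eq_complex_def
  by (metis Im_complex_of_real Re_complex_of_real complex_eq_iff zero_complex.sel)

lemma nonneg_coeffs_mult: "nonneg_coeffs p \<Longrightarrow> nonneg_coeffs q \<Longrightarrow> nonneg_coeffs (p * q)"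
  by (simp add: nonneg_coeffs_def coeff_mult sum_nonneg)

lemma nonneg_coeffs_smult: "0 \<le> c \<Longrightarrow> nonneg_coeffs p \<Longrightarrow> nonneg_coeffs (smult c p)"
  by (simp add: nonneg_coeffs_def)

lemma nonneg_coeffs_monom: "0 \<le> c \<Longrightarrow> nonneg_coeffs (monom c n)"
  by (simp add: nonneg_coeffs_def coeff_monom)

lemma nonneg_coeffs_reflect_poly: "nonneg_coeffs p \<Longrightarrow> nonneg_coeffs (reflect_poly p)"
  by (simp add: nonneg_coeffs_def coeff_reflect_poly)

lemma even_poly_odd_coeff_eq_0:
  fixes g :: "complex poly"
  assumes "\<And>z. poly g (- z) = poly g z" and "odd l"
  shows "coeff g l = 0"
proof -
  have "poly (g \<circ>\<^sub>p [:0, -1:]) = poly g"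
    by (simp add: fun_eq_iff poly_pcompose assms(1))
  then have "g \<circ>\<^sub>p [:0, -1:] = g"
    by (simp add: poly_eq_poly_eq_iff)
  then have "(-1) ^ l * coeff g l = coeff g l"
    by (metis coeff_pcompose_linear)
  with assms(2) show ?thesis
    by simp
qed

lemma coeff_prod_linear_length: "coeff (\<Prod>a\<leftarrow>as. [:a, 1 :: 'a :: idom:]) (length as) = 1"
proof -
  have "degree (\<Prod>a\<leftarrow>as. [:a, 1 :: 'a:]) = length as \<and> lead_coeff (\<Prod>a\<leftarrow>as. [:a, 1 :: 'a:]) = 1"
  proof (induction as)
    case (Cons a as)
    then have "(\<Prod>a\<leftarrow>as. [:a, 1 :: 'a:]) \<noteq> 0"
      by auto
    with Cons show ?case
      using coeff_mult_degree_sum[of "[:a, 1:]" "\<Prod>a\<leftarrow>as. [:a, 1 :: 'a:]"]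
      by (auto simp: degree_mult_eq simp del: mult_pCons_left)
  qed simp
  then show ?thesis
    by auto
qed

lemma prod_linear_pcompose_scale:
  "(\<Prod>a\<leftarrow>as. [:a, 1:]) \<circ>\<^sub>p [:0, c:] = (\<Prod>a\<leftarrow>as. [:a, c :: 'a :: comm_ring_1:])"
  by (induction as) (simp_all add: pcompose_1 pcompose_mult pcompose_pCons del: mult_pCons_left)

lemma reflect_prod_linear:
  assumes "c \<noteq> 0"
  shows "reflect_poly (\<Prod>a\<leftarrow>as. [:a, c:]) = (\<Prod>a\<leftarrow>as. [:c, a :: 'a :: idom:])"
proof (induction as)
  case (Cons a as)
  have "reflect_poly [:a, c:] = [:c, a:]"
    using assms by (simp add: reflect_poly_pCons' monom_altdef)
  with Cons show ?case
    by (simp add: reflect_poly_mult del: mult_pCons_left)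
qed simp

lemma nonneg_coeffs_prod_linear:
  fixes g :: "complex poly" and y :: real
  assumes g_prod: "g = (\<Prod>a\<leftarrow>\<alpha>s. [:a, 1:])" and g_even: "\<And>z. poly g (- z) = poly g z"
    and g_nonneg: "nonneg_coeffs g"
  shows "nonneg_coeffs (\<Prod>a\<leftarrow>\<alpha>s. [:complex_of_real y, a:])"
proof (cases "y = 0")
  case True
  have "(\<Prod>a\<leftarrow>\<alpha>s. [:0, a:]) = monom (\<Prod>a\<leftarrow>\<alpha>s. a) (length \<alpha>s)"
    by (induction \<alpha>s) (simp_all add: monom_Suc smult_monom)
  moreover have "(\<Prod>a\<leftarrow>\<alpha>s. a) = coeff g 0"
    by (simp add: g_prod coeff_0_prod_list o_def)
  ultimately show ?thesis
    using True g_nonneg by (simp add: nonneg_coeffs_monom nonneg_coeffs_def)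
next
  case False
  \<comment> \<open>the product is the reversal of \<open>g(y t)\<close>, whose coefficients \<open>y\<^sup>l c\<^sub>l\<close> vanish for odd \<open>l\<close>\<close>
  have "nonneg_coeffs (g \<circ>\<^sub>p [:0, complex_of_real y:])"
    unfolding nonneg_coeffs_def coeff_pcompose_linear
  proof
    fix i
    show "0 \<le> complex_of_real y ^ i * coeff g i"
    proof (cases "even i")
      case True
      then have "0 \<le> complex_of_real y ^ i"
        by (simp add: less_eq_complex_def zero_le_even_power flip: of_real_power)
      with g_nonneg show ?thesis
        by (simp add: nonneg_coeffs_def)
    qed (simp add: even_poly_odd_coeff_eq_0[OF g_even])
  qed
  moreover have "(\<Prod>a\<leftarrow>\<alpha>s. [:complex_of_real y, a:]) = reflect_poly (g \<circ>\<^sub>p [:0, complex_of_real y:])"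
    using False by (simp add: g_prod prod_linear_pcompose_scale reflect_prod_linear)
  ultimately show ?thesis
    by (simp add: nonneg_coeffs_reflect_poly)
qed

lemma prod_list_map_mult:
  "(\<Prod>a\<leftarrow>as. f a * g a) = (\<Prod>a\<leftarrow>as. f a) * (\<Prod>a\<leftarrow>as. (g a :: 'b :: comm_monoid_mult))"
  by (induction as) (simp_all add: mult_ac)

lemma prod_pcompose_real_roots_eq_smult:
  fixes g Q :: "complex poly" and x :: real
  assumes g_prod: "g = (\<Prod>a\<leftarrow>\<alpha>s. [:a, 1:])" and g_even: "\<And>z. poly g (- z) = poly g z"
    and g_nonneg: "nonneg_coeffs g"
    and "Q \<noteq> 0" and "\<And>z. poly Q z = 0 \<Longrightarrow> z \<in> \<real>"
  shows "\<exists>P. nonneg_coeffs P \<and>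
           (\<Prod>a\<leftarrow>\<alpha>s. Q \<circ>\<^sub>p [:complex_of_real x, a:]) = smult (lead_coeff Q ^ length \<alpha>s) P"
  using assms(4,5)
proof (induction "degree Q" arbitrary: Q)
  case 0
  then obtain c where Q: "Q = [:c:]"
    by (metis degree_0_id)
  have "(\<Prod>a\<leftarrow>\<alpha>s. Q \<circ>\<^sub>p [:complex_of_real x, a:]) = smult (lead_coeff Q ^ length \<alpha>s) 1"
    by (induction \<alpha>s) (simp_all add: Q)
  moreover have "nonneg_coeffs 1"
    by (simp add: nonneg_coeffs_def coeff_1 less_eq_complex_def)
  ultimately show ?case
    by blast
next
  case (Suc n)
  have "\<not> constant (poly Q)"
    using Suc.hyps(2) by (simp add: constant_degree)
  then obtain r where r: "poly Q r = 0"
    using fundamental_theorem_of_algebra by blast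
  then obtain Q' where Q: "Q = [:- r, 1:] * Q'"
    by (metis poly_eq_0_iff_dvd dvdE)
  with Suc.prems have "Q' \<noteq> 0" "\<And>z. poly Q' z = 0 \<Longrightarrow> z \<in> \<real>"
    by auto
  moreover from this have "n = degree Q'"
    using Suc.hyps(2) Q by (simp add: degree_mult_eq del: mult_pCons_left)
  ultimately obtain P' where P': "nonneg_coeffs P'"
    "(\<Prod>a\<leftarrow>\<alpha>s. Q' \<circ>\<^sub>p [:complex_of_real x, a:]) = smult (lead_coeff Q' ^ length \<alpha>s) P'"
    using Suc.hyps(1)[of Q'] by blast
  have "r \<in> \<real>"
    using Suc.prems(2) r by blast
  then have "[:- r, 1:] \<circ>\<^sub>p [:complex_of_real x, a:] = [:complex_of_real (x - Re r), a:]" for a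
    by (simp add: pcompose_pCons complex_is_Real_iff complex_eq_iff)
  then have "(\<Prod>a\<leftarrow>\<alpha>s. Q \<circ>\<^sub>p [:complex_of_real x, a:]) =
      (\<Prod>a\<leftarrow>\<alpha>s. [:complex_of_real (x - Re r), a:]) * (\<Prod>a\<leftarrow>\<alpha>s. Q' \<circ>\<^sub>p [:complex_of_real x, a:])"
    by (simp add: Q pcompose_mult prod_list_map_mult del: mult_pCons_left)
  also have "\<dots> = smult (lead_coeff Q ^ length \<alpha>s) ((\<Prod>a\<leftarrow>\<alpha>s. [:complex_of_real (x - Re r), a:]) * P')"
    using P'(2) unfolding Q lead_coeff_mult by simp
  finally show ?case
    using nonneg_coeffs_mult[OF nonneg_coeffs_prod_linear[OF g_prod g_even g_nonneg] P'(1)] by blast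
qed

lemma nonneg_coeffs_prod_pcompose:
  fixes g Q :: "complex poly" and x :: real
  assumes g_prod: "g = (\<Prod>a\<leftarrow>\<alpha>s. [:a, 1:])" and g_even: "\<And>z. poly g (- z) = poly g z"
    and g_nonneg: "nonneg_coeffs g" and Q: "real_rooted_poly Q"
  shows "nonneg_coeffs (\<Prod>a\<leftarrow>\<alpha>s. Q \<circ>\<^sub>p [:complex_of_real x, a:])"
proof -
  obtain P where P: "nonneg_coeffs P"
    "(\<Prod>a\<leftarrow>\<alpha>s. Q \<circ>\<^sub>p [:complex_of_real x, a:]) = smult (lead_coeff Q ^ length \<alpha>s) P"
    using prod_pcompose_real_roots_eq_smult[OF g_prod g_even g_nonneg real_rooted_poly_nonzero[OF Q]] Q
    unfolding real_rooted_poly_def by blast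
  have "even (length \<alpha>s)"
  proof (rule ccontr)
    assume "odd (length \<alpha>s)"
    then have "coeff g (length \<alpha>s) = 0"
      by (rule even_poly_odd_coeff_eq_0[OF g_even])
    then show False
      using coeff_prod_linear_length[of \<alpha>s] g_prod by simp
  qed
  moreover obtain r where "lead_coeff Q = complex_of_real r"
    using Q unfolding real_rooted_poly_def by (metis Reals_cases)
  ultimately have "0 \<le> lead_coeff Q ^ length \<alpha>s"
    by (simp add: less_eq_complex_def zero_le_even_power flip: of_real_power)
  then show ?thesis
    unfolding P(2) using P(1) by (rule nonneg_coeffs_smult)
qed

lemma closed_complex_nonneg: "closed {z :: complex. 0 \<le> z}"
  unfolding less_eq_complex_def by (intro closed_Collect_conj closed_Collect_le closed_Collect_eq continuous_intros)

lemma higher_deriv_poly: "(deriv ^^ k) (poly p) = poly ((pderiv ^^ k) p)"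
proof (induction k)
  case (Suc k)
  have "(deriv ^^ Suc k) (poly p) = deriv (poly ((pderiv ^^ k) p))"
    by (simp add: Suc)
  also have "\<dots> = poly ((pderiv ^^ Suc k) p)"
    by (simp add: fun_eq_iff DERIV_imp_deriv[OF poly_DERIV])
  finally show ?case .
qed simp

lemma higher_deriv_poly_0: "(deriv ^^ k) (poly p) 0 / fact k = coeff p k"
  by (simp add: higher_deriv_poly poly_0_coeff_0 coeff_higher_pderiv flip: pochhammer_fact)

definition shift_prod :: "(complex \<Rightarrow> complex) \<Rightarrow> complex list \<Rightarrow> complex \<Rightarrow> complex \<Rightarrow> complex" where
  "shift_prod f \<alpha>s z = (\<lambda>t. \<Prod>a\<leftarrow>\<alpha>s. f (z + a * t))"

lemma shift_prod_Nil [simp]: "shift_prod f [] z = (\<lambda>t. 1)"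
  and shift_prod_Cons [simp]: "shift_prod f (a # \<alpha>s) z = (\<lambda>t. f (z + a * t) * shift_prod f \<alpha>s z t)"
  by (simp_all add: shift_prod_def)

lemma shift_prod_poly: "shift_prod (poly p) \<alpha>s z = poly (\<Prod>a\<leftarrow>\<alpha>s. p \<circ>\<^sub>p [:z, a:])"
  by (induction \<alpha>s) (simp_all add: fun_eq_iff poly_pcompose mult.commute)

lemma holomorphic_shift_prod:
  assumes "f holomorphic_on UNIV"
  shows "shift_prod f \<alpha>s z holomorphic_on UNIV"
proof (induction \<alpha>s)
  case (Cons a \<alpha>s)
  have "(\<lambda>t. f (z + a * t)) holomorphic_on UNIV"
    using holomorphic_on_compose[of "\<lambda>t. z + a * t" UNIV f] assms
    by (simp add: o_def holomorphic_intros holomorphic_on_subset)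
  with Cons show ?case
    by (simp add: holomorphic_on_mult)
qed (simp add: holomorphic_on_const)

lemma continuous_on_shift_prod:
  assumes "continuous_on UNIV f"
  shows "continuous_on UNIV (shift_prod f \<alpha>s z)"
  by (induction \<alpha>s) (auto intro!: continuous_intros continuous_on_compose2[OF assms])

lemma continuous_on_shift_prod_center:
  assumes "continuous_on UNIV f"
  shows "continuous_on UNIV (\<lambda>z. shift_prod f \<alpha>s z t)"
  by (induction \<alpha>s) (auto intro!: continuous_intros continuous_on_compose2[OF assms])

lemma uniform_limit_shift_prod:
  assumes lim: "\<And>K. compact K \<Longrightarrow> uniform_limit K F f sequentially"
    and f: "continuous_on UNIV f" and "compact K"
  shows "uniform_limit K (\<lambda>n. shift_prod (F n) \<alpha>s z) (shift_prod f \<alpha>s z) sequentially"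
proof (induction \<alpha>s)
  case Nil
  then show ?case
    by (simp add: uniform_limit_const)
next
  case (Cons a \<alpha>s)
  have "compact ((\<lambda>t. z + a * t) ` K)"
    using \<open>compact K\<close> by (intro compact_continuous_image continuous_intros)
  then have "uniform_limit K (\<lambda>n t. F n (z + a * t)) (\<lambda>t. f (z + a * t)) sequentially"
    by (intro uniform_limit_compose'[OF lim]) auto
  moreover have "continuous_on K (\<lambda>t. f (z + a * t))"
    by (intro continuous_on_compose2[OF f] continuous_intros) auto
  moreover have "continuous_on K (shift_prod f \<alpha>s z)"
    using continuous_on_subset[OF continuous_on_shift_prod[OF f]] by blast
  ultimately show ?case
    using \<open>compact K\<close> Cons
    by (simp del: shift_prod_Cons add: shift_prod_Cons[abs_def])
       (intro uniform_lim_mult compact_imp_bounded compact_continuous_image)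
qed

lemma laguerre_polya_imp_nonneg_taylor_coeffs:
  fixes g :: "complex poly" and x :: real
  assumes g_prod: "g = (\<Prod>a\<leftarrow>\<alpha>s. [:a, 1:])" and g_even: "\<And>z. poly g (- z) = poly g z"
    and g_nonneg: "nonneg_coeffs g"
    and LP: "laguerre_polya f" and f: "continuous_on UNIV f"
  shows "0 \<le> (deriv ^^ k) (shift_prod f \<alpha>s (complex_of_real x)) 0 / fact k"
proof -
  obtain p where p: "\<And>n. real_rooted_poly (p n)"
    "\<And>K. compact K \<Longrightarrow> uniform_limit K (\<lambda>n. poly (p n)) f sequentially"
    using LP unfolding laguerre_polya_iff by blast
  define P where "P n = (\<Prod>a\<leftarrow>\<alpha>s. p n \<circ>\<^sub>p [:complex_of_real x, a:])" for n
  have "uniform_limit (cball 0 1) (\<lambda>n. poly (P n)) (shift_prod f \<alpha>s (complex_of_real x)) sequentially"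
    using uniform_limit_shift_prod[OF p(2) f compact_cball] by (simp add: P_def shift_prod_poly)
  then have "uniform_limit (ball 0 1) (\<lambda>n. poly (P n)) (shift_prod f \<alpha>s (complex_of_real x)) sequentially"
    by (rule uniform_limit_on_subset) auto
  moreover have "poly (P n) holomorphic_on ball 0 1" for n
    using poly_holomorphic_on[of "\<lambda>z. z" "ball 0 1" "P n"] by (simp add: holomorphic_on_id)
  ultimately have "(\<lambda>n. (deriv ^^ k) (poly (P n)) 0) \<longlonglongrightarrow> (deriv ^^ k) (shift_prod f \<alpha>s (complex_of_real x)) 0"
    by (intro higher_deriv_complex_uniform_limit always_eventually allI) auto
  then have lim: "(\<lambda>n. coeff (P n) k) \<longlonglongrightarrow> (deriv ^^ k) (shift_prod f \<alpha>s (complex_of_real x)) 0 / fact k"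
    unfolding higher_deriv_poly_0[symmetric] by (intro tendsto_divide tendsto_const) auto
  have "\<forall>\<^sub>F n in sequentially. coeff (P n) k \<in> {z. 0 \<le> z}"
    using nonneg_coeffs_prod_pcompose[OF g_prod g_even g_nonneg p(1)]
    by (simp add: P_def nonneg_coeffs_def)
  from Lim_in_closed_set[OF closed_complex_nonneg this sequentially_bot lim] show ?thesis
    by simp
qed

section \<open>Reality of the zeros\<close>

lemma norm_mono_of_nonneg_taylor_coeffs:
  fixes F :: "complex \<Rightarrow> complex"
  assumes F: "F holomorphic_on UNIV" and nonneg: "\<And>k. 0 \<le> (deriv ^^ k) F 0 / fact k"
    and "0 \<le> s" "s \<le> t"
  shows "norm (F (complex_of_real s)) \<le> norm (F (complex_of_real t))"
proof -
  define A where "A k = (deriv ^^ k) F 0 / fact k" for k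
  have A: "Im (A k) = 0" "0 \<le> Re (A k)" for k
    using nonneg[of k] by (simp_all add: A_def less_eq_complex_def)
  have sums: "(\<lambda>k. complex_of_real (Re (A k) * r ^ k)) sums F (complex_of_real r)" for r
  proof -
    have eq: "(\<lambda>k. A k * complex_of_real r ^ k) = (\<lambda>k. complex_of_real (Re (A k) * r ^ k))"
      using A(1) by (simp add: fun_eq_iff complex_eq_iff flip: of_real_power)
    have "(\<lambda>k. A k * complex_of_real r ^ k) sums F (complex_of_real r)"
      using holomorphic_power_series[of F 0 "\<bar>r\<bar> + 1" "complex_of_real r"]
        holomorphic_on_subset[OF F] by (simp add: A_def)
    then show ?thesis
      unfolding eq .
  qed
  have Re_sums: "(\<lambda>k. Re (A k) * r ^ k) sums Re (F (complex_of_real r))" for r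
    using sums_Re[OF sums] by simp
  have Im_F: "Im (F (complex_of_real r)) = 0" for r
  proof -
    have "(\<lambda>k. 0) sums Im (F (complex_of_real r))"
      using sums_Im[OF sums] by simp
    then show ?thesis
      by (simp add: sums_iff)
  qed
  have "0 \<le> Re (F (complex_of_real s))"
    using A \<open>0 \<le> s\<close> by (intro sums_le[OF _ sums_zero Re_sums]) auto
  moreover have "Re (F (complex_of_real s)) \<le> Re (F (complex_of_real t))"
    using A assms(3,4) by (intro sums_le[OF _ Re_sums Re_sums] mult_left_mono power_mono) auto
  ultimately show ?thesis
    using Im_F by (simp add: cmod_eq_Re)
qed

lemma root_in_same_half_plane:
  fixes g :: "complex poly"
  assumes g_prod: "g = (\<Prod>a\<leftarrow>\<alpha>s. [:a, 1:])" and g_even: "\<And>z. poly g (- z) = poly g z"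
    and "poly g w = 0" "w \<notin> \<real>" "Im z \<noteq> 0"
  shows "\<exists>\<alpha>\<in>set \<alpha>s. Im \<alpha> * Im z > 0"
proof -
  have "poly g u = (\<Prod>a\<leftarrow>\<alpha>s. a + u)" for u
    unfolding g_prod by (induction \<alpha>s) (simp_all add: algebra_simps)
  then have roots: "- u \<in> set \<alpha>s" if "poly g u = 0" for u
    using that by (auto simp: prod_list_zero_iff add_eq_0_iff)
  have "Im w \<noteq> 0"
    using \<open>w \<notin> \<real>\<close> by (simp add: complex_is_Real_iff)
  with \<open>Im z \<noteq> 0\<close> have "Im w * Im z \<noteq> 0"
    by simp
  then have "Im (- w) * Im z > 0 \<or> Im w * Im z > 0"
    by (simp only: uminus_complex.sel mult_minus_left) linarith
  moreover have "- w \<in> set \<alpha>s" "w \<in> set \<alpha>s"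
    using roots[of w] roots[of "- w"] \<open>poly g w = 0\<close> g_even[of w] by auto
  ultimately show ?thesis
    by blast
qed

lemma shift_prod_filter_zero:
  "shift_prod f \<alpha>s z t = f z ^ length (filter (\<lambda>a. a = 0) \<alpha>s) * shift_prod f (filter (\<lambda>a. a \<noteq> 0) \<alpha>s) z t"
  by (induction \<alpha>s) (simp_all add: mult_ac)

lemma shift_prod_not_identically_zero:
  assumes f: "f holomorphic_on UNIV" and "f w \<noteq> 0" and "0 \<notin> set \<alpha>s"
  shows "\<exists>t. shift_prod f \<alpha>s z t \<noteq> 0"
  using assms(3)
proof (induction \<alpha>s)
  case (Cons a \<alpha>s)
  then obtain t where t: "shift_prod f \<alpha>s z t \<noteq> 0"
    by auto
  show ?case
  proof (rule ccontr)
    assume "\<not> ?case"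
    then have zero: "f (z + a * u) * shift_prod f \<alpha>s z u = 0" for u
      by simp
    obtain r where "r > 0" and r: "\<And>u. dist t u < r \<Longrightarrow> shift_prod f \<alpha>s z u \<noteq> 0"
      using continuous_on_open_avoid[OF holomorphic_on_imp_continuous_on[OF holomorphic_shift_prod[OF f]]
          open_UNIV _ t] by auto
    have hol: "(\<lambda>u. f (z + a * u)) holomorphic_on UNIV"
      using holomorphic_on_compose[of "\<lambda>u. z + a * u" UNIV f] f
      by (simp add: o_def holomorphic_intros holomorphic_on_subset)
    have zero_ball: "f (z + a * u) = 0" if "u \<in> ball t r" for u
      using zero[of u] r[of u] that by auto
    have "ball t r \<noteq> {}"
      using \<open>r > 0\<close> by simp
    then have "f (z + a * u) = 0" for u
      by (rule analytic_continuation_open[OF open_ball open_UNIV _ connected_UNIV subset_UNIV hol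
          holomorphic_on_const zero_ball UNIV_I])
    from this[of "(w - z) / a"] show False
      using Cons.prems \<open>f w \<noteq> 0\<close> by simp
  qed
qed simp

lemma shift_prod_vanishes_on_segment:
  fixes f :: "complex \<Rightarrow> complex"
  assumes f: "f holomorphic_on UNIV" and "f z1 \<noteq> 0"
    and nonneg: "\<And>k x. 0 \<le> (deriv ^^ k) (shift_prod f \<alpha>s (complex_of_real x)) 0 / fact k"
    and zero: "shift_prod f (filter (\<lambda>a. a \<noteq> 0) \<alpha>s) (complex_of_real x0) (complex_of_real t0) = 0"
    and "0 \<le> s" "s \<le> t0"
  shows "shift_prod f (filter (\<lambda>a. a \<noteq> 0) \<alpha>s) (complex_of_real x0) (complex_of_real s) = 0"
proof -
  define m where "m = length (filter (\<lambda>a. a = 0) \<alpha>s)"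
  define H where "H x t = shift_prod f (filter (\<lambda>a. a \<noteq> 0) \<alpha>s) (complex_of_real x) (complex_of_real t)"
    for x t
  \<comment> \<open>cancelling \<open>f(y)\<^sup>m\<close> needs \<open>f(y) \<noteq> 0\<close>, true near \<open>x0\<close>; continuity then gives \<open>y = x0\<close>\<close>
  have H_mono: "norm (H y s) \<le> norm (H y t0)" if "f (complex_of_real y) \<noteq> 0" for y
  proof -
    have "norm (shift_prod f \<alpha>s (complex_of_real y) (complex_of_real s))
        \<le> norm (shift_prod f \<alpha>s (complex_of_real y) (complex_of_real t0))"
      using assms(5,6) by (intro norm_mono_of_nonneg_taylor_coeffs holomorphic_shift_prod f nonneg)
    then have "norm (f (complex_of_real y)) ^ m * norm (H y s) \<le> norm (f (complex_of_real y)) ^ m * norm (H y t0)"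
      by (simp add: shift_prod_filter_zero[of f \<alpha>s] H_def m_def norm_mult norm_power)
    then show ?thesis
      using that by (simp add: mult_le_cancel_left_pos)
  qed
  have "\<forall>\<^sub>F u in at (complex_of_real x0). f u \<noteq> 0 \<and> u \<in> UNIV"
    by (rule non_zero_neighbour_alt[OF f open_UNIV connected_UNIV _ _ \<open>f z1 \<noteq> 0\<close>]) auto
  then have f_nonzero: "\<forall>\<^sub>F y in at x0. f (complex_of_real y) \<noteq> 0"
    unfolding eventually_at by (auto simp: dist_of_real)
  have H_lim: "((\<lambda>y. H y t) \<longlongrightarrow> H x0 t) (at x0)" for t
    using continuous_on_compose2[OF continuous_on_shift_prod_center[OF holomorphic_on_imp_continuous_on[OF f]]
        continuous_on_of_real[OF continuous_on_id], of UNIV _ "complex_of_real t"]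
    by (simp add: H_def continuous_on_def)
  have "norm (H x0 s) \<le> norm (H x0 t0)"
    by (intro tendsto_le[OF at_neq_bot tendsto_norm[OF H_lim] tendsto_norm[OF H_lim]]
        eventually_mono[OF f_nonzero] H_mono)
  then show ?thesis
    using zero by (simp add: H_def)
qed

lemma zeros_real_of_nonneg_taylor_coeffs:
  fixes f :: "complex \<Rightarrow> complex" and g :: "complex poly"
  assumes f: "f holomorphic_on UNIV" and "f z1 \<noteq> 0"
    and g_prod: "g = (\<Prod>a\<leftarrow>\<alpha>s. [:a, 1:])" and g_even: "\<And>z. poly g (- z) = poly g z"
    and "poly g w = 0" "w \<notin> \<real>"
    and nonneg: "\<And>k x. 0 \<le> (deriv ^^ k) (shift_prod f \<alpha>s (complex_of_real x)) 0 / fact k"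
    and "f z0 = 0"
  shows "z0 \<in> \<real>"
proof (rule ccontr)
  assume "z0 \<notin> \<real>"
  then have "Im z0 \<noteq> 0"
    by (simp add: complex_is_Real_iff)
  then obtain \<alpha> where "\<alpha> \<in> set \<alpha>s" and \<alpha>: "Im \<alpha> * Im z0 > 0"
    using root_in_same_half_plane[OF g_prod g_even \<open>poly g w = 0\<close> \<open>w \<notin> \<real>\<close>] by blast
  define t0 where "t0 = Im z0 / Im \<alpha>"
  define x0 where "x0 = Re z0 - Re \<alpha> * t0"
  define L where "L = filter (\<lambda>a. a \<noteq> 0) \<alpha>s"
  have "t0 > 0"
    using \<alpha> by (auto simp: t0_def zero_less_divide_iff zero_less_mult_iff)
  have "Im \<alpha> \<noteq> 0"
    using \<alpha> by auto
  then have "complex_of_real x0 + \<alpha> * complex_of_real t0 = z0" and "\<alpha> \<in> set L"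
    using \<open>\<alpha> \<in> set \<alpha>s\<close> by (auto simp: complex_eq_iff x0_def t0_def L_def)
  then have "shift_prod f L (complex_of_real x0) (complex_of_real t0) = 0"
    using \<open>f z0 = 0\<close> by (auto simp: shift_prod_def prod_list_zero_iff)
  then have segment: "shift_prod f L (complex_of_real x0) (complex_of_real s) = 0"
    if "0 \<le> s" "s \<le> t0" for s
    using shift_prod_vanishes_on_segment[OF f \<open>f z1 \<noteq> 0\<close> nonneg _ that] by (simp add: L_def)
  have "shift_prod f L (complex_of_real x0) u = 0" for u
  proof (rule analytic_continuation[OF holomorphic_shift_prod[OF f] open_UNIV connected_UNIV subset_UNIV UNIV_I])
    show "0 islimpt complex_of_real ` {0..t0}"
      unfolding islimpt_approachable
    proof (intro allI impI)
      fix e :: real assume "e > 0"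
      then show "\<exists>u\<in>complex_of_real ` {0..t0}. u \<noteq> 0 \<and> dist u 0 < e"
        using \<open>t0 > 0\<close> by (intro bexI[of _ "complex_of_real (min t0 (e / 2))"]) (auto simp: dist_norm)
    qed
    show "shift_prod f L (complex_of_real x0) v = 0" if "v \<in> complex_of_real ` {0..t0}" for v
      using that segment by auto
  qed simp
  moreover have "0 \<notin> set L"
    by (simp add: L_def)
  ultimately show False
    using shift_prod_not_identically_zero[OF f \<open>f z1 \<noteq> 0\<close>] by blast
qed

theorem theorem2:
  fixes f f1 :: "complex \<Rightarrow> complex" and b :: real
    and g :: "complex poly" and \<alpha>s :: "complex list"
  assumes b_nonneg: "b \<ge> 0"
    and f_def: "\<And>z. f z = exp (- complex_of_real b * z\<^sup>2) * f1 z"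
    and f1_real: "real_entire f1"
    and f1_genus: "genus_le_1 f1"
    and f1_nonzero: "\<exists>z. f1 z \<noteq> 0"
    and g_prod: "g = (\<Prod>a\<leftarrow>\<alpha>s. [:a, 1:])"
    and g_even: "\<And>z. poly g (- z) = poly g z"
    and g_coeffs: "\<And>l. \<exists>c::real. c \<ge> 0 \<and> coeff g l = complex_of_real c"
    and g_nonreal_root: "\<exists>z. poly g z = 0 \<and> z \<notin> \<real>"
  shows "laguerre_polya f \<longleftrightarrow>
    (\<forall>k::nat. \<forall>x::real.
       let A = (deriv ^^ k) (\<lambda>t. \<Prod>a\<leftarrow>\<alpha>s. f (complex_of_real x + a * t)) 0 / fact k
       in Im A = 0 \<and> Re A \<ge> 0)"
proof -
  have f_eq: "f = (\<lambda>z. exp (- complex_of_real b * z\<^sup>2) * f1 z)"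
    by (simp add: fun_eq_iff f_def)
  have f: "f holomorphic_on UNIV"
    using f1_real unfolding f_eq real_entire_def by (auto intro!: holomorphic_intros)
  have g_nonneg: "nonneg_coeffs g"
    using g_coeffs by (simp add: nonneg_coeffs_iff)
  have "laguerre_polya f \<longleftrightarrow> (\<forall>k x. 0 \<le> (deriv ^^ k) (shift_prod f \<alpha>s (complex_of_real x)) 0 / fact k)"
  proof
    assume "laguerre_polya f"
    then show "\<forall>k x. 0 \<le> (deriv ^^ k) (shift_prod f \<alpha>s (complex_of_real x)) 0 / fact k"
      using laguerre_polya_imp_nonneg_taylor_coeffs[OF g_prod g_even g_nonneg _
          holomorphic_on_imp_continuous_on[OF f]] by blast
  next
    assume nonneg: "\<forall>k x. 0 \<le> (deriv ^^ k) (shift_prod f \<alpha>s (complex_of_real x)) 0 / fact k"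
    obtain w z1 where "poly g w = 0" "w \<notin> \<real>" "f1 z1 \<noteq> 0"
      using g_nonreal_root f1_nonzero by blast
    then have "z \<in> \<real>" if "f1 z = 0" for z
      using zeros_real_of_nonneg_taylor_coeffs[OF f _ g_prod g_even _ _ nonneg[rule_format], of z1 w z] that
      by (simp add: f_def)
    then have "laguerre_polya f1"
      using f1_real f1_genus \<open>f1 z1 \<noteq> 0\<close> by (intro laguerre_polya_genus_le_1)
    then show "laguerre_polya f"
      unfolding f_eq by (intro laguerre_polya_mult laguerre_polya_exp_neg_square b_nonneg)
  qed
  then show ?thesis
    by (auto simp: Let_def shift_prod_def less_eq_complex_def)
qed

end
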